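(* Let $X,Y$ be mm-spaces and let $\varphi:I\to X$, $\psi:I\to Y$ be parameters of $X$ and $Y$. Then \[ \square(\varphi^*d_X,\psi^*d_Y)=\operatorname{dis}\big((\varphi,\psi)_*\mathcal L^1\big). \]
   Context: An mm-space is a complete separable metric space with a Borel probability measure. $I=[0,1)$ with Lebesgue measure $\mathcal L^1$; a parameter of $X$ is a Borel $\varphi:I\to X$ with $\varphi_*\mathcal L^1=m_X$; $\varphi^*d_X(s,t):=d_X(\varphi(s),\varphi(t))$. For pseudo-metrics $\rho_1,\rho_2$ on $I$, $\square(\rho_1,\rho_2)$ is the infimum of $\varepsilon\ge0$ such that some Borel $I_0\subset I$ has $\mathcal L^1(I_0)\ge1-\varepsilon$ and $|\rho_1(s,t)-\rho_2(s,t)|\le\varepsilon$ for all $s,t\in I_0$. For nonempty $S\subset X\times Y$, $\operatorname{dis}S:=\sup\{|d_X(x,x')-d_Y(y,y')|:(x,y),(x',y')\in S\}$, $\operatorname{dis}\emptyset:=\infty$; for a Borel probability measure $\pi$ on $X\times Y$, $\operatorname{dis}\pi:=\inf_S\max\{\operatorname{dis}S,1-\pi(S)\}$ over closed $S\subset X\times Y$. *)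

theory Defs
  imports "HOL-Probability.Probability"
begin

definition unitI :: "real measure" where
  "unitI = restrict_space lborel {0..<1}"

definition mm_space :: "'a::polish_space measure \<Rightarrow> bool" where
  "mm_space m \<longleftrightarrow> sets m = sets borel \<and> prob_space m"

definition parameter :: "(real \<Rightarrow> 'a::polish_space) \<Rightarrow> 'a measure \<Rightarrow> bool" where
  "parameter \<phi> m \<longleftrightarrow> \<phi> \<in> borel_measurable unitI \<and> distr unitI borel \<phi> = m"

definition pullback_dist :: "(real \<Rightarrow> 'a::metric_space) \<Rightarrow> real \<Rightarrow> real \<Rightarrow> real" where
  "pullback_dist \<phi> s t = dist (\<phi> s) (\<phi> t)"

definition box_dist :: "(real \<Rightarrow> real \<Rightarrow> real) \<Rightarrow> (real \<Rightarrow> real \<Rightarrow> real) \<Rightarrow> real" where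
  "box_dist \<rho>1 \<rho>2 = Inf {\<epsilon>. \<epsilon> \<ge> 0 \<and> (\<exists>I0. I0 \<in> sets borel \<and> I0 \<subseteq> {0..<1} \<and>
       measure lborel I0 \<ge> 1 - \<epsilon> \<and>
       (\<forall>s\<in>I0. \<forall>t\<in>I0. \<bar>\<rho>1 s t - \<rho>2 s t\<bar> \<le> \<epsilon>))}"

definition dis_set :: "('a::metric_space \<times> 'b::metric_space) set \<Rightarrow> ereal" where
  "dis_set S = (if S = {} then \<infinity> else
     (SUP p\<in>S \<times> S. ereal \<bar>dist (fst (fst p)) (fst (snd p)) - dist (snd (fst p)) (snd (snd p))\<bar>))"

definition dis_measure :: "('a::metric_space \<times> 'b::metric_space) measure \<Rightarrow> ereal" where
  "dis_measure \<pi> = (INF S\<in>{S. closed S}. max (dis_set S) (ereal (1 - measure \<pi> S)))"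

end

theory Submission
  imports Defs
begin

text \<open>Both sides are infima of the same kind of quantity. A set \<open>I\<^sub>0\<close> on which the pulled-back
  metrics are \<open>\<epsilon>\<close>-close is sent by \<open>(\<phi>, \<psi>)\<close> into a set of distortion at most \<open>\<epsilon>\<close>, and its
  closure is still such a set, carrying \<open>\<pi>\<close>-mass at least \<open>\<L>\<^sup>1(I\<^sub>0)\<close>, where
  \<open>\<pi> = (\<phi>, \<psi>)\<^sub>*\<L>\<^sup>1\<close>. Conversely, the preimage
  of a closed set \<open>S\<close> is a Borel subset of \<open>I\<close> of measure \<open>\<pi>(S)\<close> on which the two metrics differ
  by at most \<open>dis S\<close>.\<close>

lemma space_unitI [simp]: "space unitI = {0..<1}"
  unfolding unitI_def by (simp add: space_restrict_space)

lemma sets_unitI_iff: "A \<in> sets unitI \<longleftrightarrow> A \<subseteq> {0..<1} \<and> A \<in> sets borel"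
  unfolding unitI_def by (subst sets_restrict_space_iff) auto

lemma measure_unitI: "A \<subseteq> {0..<1} \<Longrightarrow> measure unitI A = measure lborel A"
  unfolding unitI_def by (subst measure_restrict_space) auto

lemma finite_measure_unitI: "finite_measure unitI"
proof (rule finite_measureI)
  have "emeasure unitI (space unitI) = emeasure lborel {0..<1::real}"
    unfolding unitI_def by (subst emeasure_restrict_space) auto
  then show "emeasure unitI (space unitI) \<noteq> \<infinity>" by simp
qed

lemma dis_set_le_iff:
  assumes "S \<noteq> {}"
  shows "dis_set S \<le> ereal \<epsilon> \<longleftrightarrow>
    (\<forall>(x, y)\<in>S. \<forall>(x', y')\<in>S. \<bar>dist x x' - dist y y'\<bar> \<le> \<epsilon>)"
  using assms unfolding dis_set_def by (simp add: SUP_le_iff split_beta)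

lemma dis_set_nonneg: "S \<noteq> {} \<Longrightarrow> 0 \<le> dis_set S"
  using dis_set_le_iff[of S] by (auto simp: dis_set_def intro: SUP_upper2)

lemma dis_set_closure_le:
  fixes S :: "('a::metric_space \<times> 'b::metric_space) set"
  assumes "dis_set S \<le> ereal \<epsilon>"
  shows "dis_set (closure S) \<le> ereal \<epsilon>"
proof -
  define T :: "(('a \<times> 'b) \<times> ('a \<times> 'b)) set"
    where "T = {((x, y), (x', y')). \<bar>dist x x' - dist y y'\<bar> \<le> \<epsilon>}"
  have "closed T"
  proof -
    have "T = {z. \<bar>dist (fst (fst z)) (fst (snd z)) - dist (snd (fst z)) (snd (snd z))\<bar> \<le> \<epsilon>}"
      by (auto simp: T_def)
    then show ?thesis by (simp only:) (intro closed_Collect_le continuous_intros)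
  qed
  have "S \<noteq> {}"
    using assms by (auto simp: dis_set_def)
  then have "S \<times> S \<subseteq> T"
    using assms by (auto simp: dis_set_le_iff T_def)
  then have "closure S \<times> closure S \<subseteq> T"
    using closure_minimal[OF _ \<open>closed T\<close>] by (simp only: closure_Times[symmetric])
  with \<open>S \<noteq> {}\<close> show ?thesis
    by (auto simp: dis_set_le_iff T_def)
qed

lemma dis_measure_le_closed:
  "closed S \<Longrightarrow> dis_measure \<pi> \<le> max (dis_set S) (ereal (1 - measure \<pi> S))"
  unfolding dis_measure_def by (intro INF_lower) auto

definition box_admissible :: "(real \<Rightarrow> real \<Rightarrow> real) \<Rightarrow> (real \<Rightarrow> real \<Rightarrow> real) \<Rightarrow> real \<Rightarrow> bool" where
  "box_admissible \<rho>1 \<rho>2 \<epsilon> \<longleftrightarrow> \<epsilon> \<ge> 0 \<and> (\<exists>I0. I0 \<in> sets borel \<and> I0 \<subseteq> {0..<1} \<and>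
     measure lborel I0 \<ge> 1 - \<epsilon> \<and> (\<forall>s\<in>I0. \<forall>t\<in>I0. \<bar>\<rho>1 s t - \<rho>2 s t\<bar> \<le> \<epsilon>))"

lemma box_dist_eq_Inf_admissible: "box_dist \<rho>1 \<rho>2 = Inf {\<epsilon>. box_admissible \<rho>1 \<rho>2 \<epsilon>}"
  unfolding box_dist_def box_admissible_def ..

lemma box_admissible_one: "box_admissible \<rho>1 \<rho>2 1"
  unfolding box_admissible_def by (intro conjI exI[of _ "{}"]) auto

lemma bdd_below_box_admissible: "bdd_below {\<epsilon>. box_admissible \<rho>1 \<rho>2 \<epsilon>}"
  unfolding box_admissible_def by (intro bdd_belowI[of _ 0]) auto

lemma measurable_pair_unitI:
  fixes \<phi> :: "real \<Rightarrow> 'a::second_countable_topology"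
    and \<psi> :: "real \<Rightarrow> 'b::second_countable_topology"
  assumes "\<phi> \<in> borel_measurable unitI" and "\<psi> \<in> borel_measurable unitI"
  shows "(\<lambda>s. (\<phi> s, \<psi> s)) \<in> borel_measurable unitI"
  using measurable_Pair[OF assms] by (simp add: borel_prod)

lemma dis_measure_le_box_admissible:
  assumes meas: "(\<lambda>s. (\<phi> s, \<psi> s)) \<in> borel_measurable unitI"
    and adm: "box_admissible (pullback_dist \<phi>) (pullback_dist \<psi>) \<epsilon>"
  shows "dis_measure (distr unitI borel (\<lambda>s. (\<phi> s, \<psi> s))) \<le> ereal \<epsilon>"
proof -
  define f where "f = (\<lambda>s. (\<phi> s, \<psi> s))"
  from adm obtain I0 where "\<epsilon> \<ge> 0" and I0: "I0 \<in> sets borel" "I0 \<subseteq> {0..<1}"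
      and mass: "measure lborel I0 \<ge> 1 - \<epsilon>"
      and close: "\<forall>s\<in>I0. \<forall>t\<in>I0. \<bar>pullback_dist \<phi> s t - pullback_dist \<psi> s t\<bar> \<le> \<epsilon>"
    unfolding box_admissible_def by blast
  have dis_closed: "dis_measure (distr unitI borel f) \<le> ereal \<epsilon>"
    if "closed S" "dis_set S \<le> ereal \<epsilon>" "1 - measure (distr unitI borel f) S \<le> \<epsilon>" for S
  proof -
    have "max (dis_set S) (ereal (1 - measure (distr unitI borel f) S)) \<le> ereal \<epsilon>"
      using that by simp
    with dis_measure_le_closed[OF \<open>closed S\<close>] show ?thesis
      by (rule order.trans)
  qed
  show ?thesis
  proof (cases "I0 = {}")
    case True
    \<comment> \<open>then \<open>\<epsilon> \<ge> 1\<close>, and any single point is a closed set of distortion 0\<close>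
    have "1 \<le> \<epsilon>"
      using True mass by simp
    then have "1 - measure (distr unitI borel f) {f 0} \<le> \<epsilon>"
      using measure_nonneg[of "distr unitI borel f" "{f 0}"] by linarith
    then show ?thesis
      unfolding f_def[symmetric] using \<open>\<epsilon> \<ge> 0\<close>
      by (intro dis_closed[of "{f 0}"]) (auto simp: dis_set_def)
  next
    case False
    define S where "S = closure (f ` I0)"
    have "dis_set (f ` I0) \<le> ereal \<epsilon>"
      using False close by (auto simp: dis_set_le_iff f_def pullback_dist_def)
    then have "dis_set S \<le> ereal \<epsilon>"
      unfolding S_def by (rule dis_set_closure_le)
    moreover have "measure (distr unitI borel f) S \<ge> 1 - \<epsilon>"
    proof -
      have "measure lborel I0 = measure unitI I0"
        using measure_unitI[OF I0(2)] by simp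
      also have "\<dots> \<le> measure unitI (f -` S \<inter> space unitI)"
        using I0 closure_subset[of "f ` I0"] meas measurable_sets[OF meas, of S]
        by (intro finite_measure.finite_measure_mono[OF finite_measure_unitI])
          (auto simp: S_def f_def)
      also have "\<dots> = measure (distr unitI borel f) S"
        using meas by (subst measure_distr) (auto simp: S_def f_def)
      finally show ?thesis using mass by linarith
    qed
    ultimately show ?thesis
      unfolding f_def[symmetric] by (intro dis_closed[of S]) (auto simp: S_def)
  qed
qed

lemma box_admissible_of_closed:
  assumes meas: "(\<lambda>s. (\<phi> s, \<psi> s)) \<in> borel_measurable unitI"
    and "closed S"
    and dis: "dis_set S \<le> ereal \<epsilon>"
    and mass: "1 - measure (distr unitI borel (\<lambda>s. (\<phi> s, \<psi> s))) S \<le> \<epsilon>"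
  shows "box_admissible (pullback_dist \<phi>) (pullback_dist \<psi>) \<epsilon>"
  unfolding box_admissible_def
proof (intro conjI exI)
  define I0 where "I0 = (\<lambda>s. (\<phi> s, \<psi> s)) -` S \<inter> {0..<1}"
  have "S \<noteq> {}"
    using dis by (auto simp: dis_set_def)
  show "\<epsilon> \<ge> 0"
    using order.trans[OF dis_set_nonneg[OF \<open>S \<noteq> {}\<close>] dis] by simp
  have "I0 \<in> sets unitI"
    unfolding I0_def using measurable_sets[OF meas, of S] \<open>closed S\<close> by simp
  then show "I0 \<in> sets borel" "I0 \<subseteq> {0..<1}"
    by (simp_all add: sets_unitI_iff)
  have "measure lborel I0 = measure (distr unitI borel (\<lambda>s. (\<phi> s, \<psi> s))) S"
    using meas \<open>closed S\<close> \<open>I0 \<subseteq> {0..<1}\<close>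
    by (subst measure_distr) (auto simp: I0_def measure_unitI)
  then show "measure lborel I0 \<ge> 1 - \<epsilon>"
    using mass by simp
  show "\<forall>s\<in>I0. \<forall>t\<in>I0. \<bar>pullback_dist \<phi> s t - pullback_dist \<psi> s t\<bar> \<le> \<epsilon>"
    using dis \<open>S \<noteq> {}\<close> by (auto simp: dis_set_le_iff I0_def pullback_dist_def)
qed

lemma INF_box_admissible_le_closed:
  assumes meas: "(\<lambda>s. (\<phi> s, \<psi> s)) \<in> borel_measurable unitI" and "closed S"
  shows "(INF \<epsilon>\<in>{\<epsilon>. box_admissible (pullback_dist \<phi>) (pullback_dist \<psi>) \<epsilon>}. ereal \<epsilon>)
    \<le> max (dis_set S) (ereal (1 - measure (distr unitI borel (\<lambda>s. (\<phi> s, \<psi> s))) S))"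
proof (cases "dis_set S")
  case (real d)
  then have "box_admissible (pullback_dist \<phi>) (pullback_dist \<psi>)
      (max d (1 - measure (distr unitI borel (\<lambda>s. (\<phi> s, \<psi> s))) S))"
    using \<open>closed S\<close> by (intro box_admissible_of_closed[OF meas]) auto
  then show ?thesis
    using real by (auto intro: INF_lower2)
qed (use dis_set_nonneg[of S] in \<open>auto simp: dis_set_def split: if_splits\<close>)

theorem lemma4p3:
  fixes mX :: "'a::polish_space measure" and mY :: "'b::polish_space measure"
    and \<phi> :: "real \<Rightarrow> 'a" and \<psi> :: "real \<Rightarrow> 'b"
  assumes "mm_space mX" and "mm_space mY"
    and "parameter \<phi> mX" and "parameter \<psi> mY"
  shows "ereal (box_dist (pullback_dist \<phi>) (pullback_dist \<psi>))
           = dis_measure (distr unitI borel (\<lambda>s. (\<phi> s, \<psi> s)))"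
proof -
  define B where "B = {\<epsilon>. box_admissible (pullback_dist \<phi>) (pullback_dist \<psi>) \<epsilon>}"
  have meas: "(\<lambda>s. (\<phi> s, \<psi> s)) \<in> borel_measurable unitI"
    using assms(3,4) by (intro measurable_pair_unitI) (auto simp: parameter_def)
  have "ereal (Inf B) = (INF \<epsilon>\<in>B. ereal \<epsilon>)"
    using box_admissible_one bdd_below_box_admissible unfolding B_def
    by (intro ereal_Inf') auto
  also have "\<dots> = dis_measure (distr unitI borel (\<lambda>s. (\<phi> s, \<psi> s)))"
  proof (rule antisym)
    show "(INF \<epsilon>\<in>B. ereal \<epsilon>) \<le> dis_measure (distr unitI borel (\<lambda>s. (\<phi> s, \<psi> s)))"
      unfolding dis_measure_def B_def by (intro INF_greatest INF_box_admissible_le_closed[OF meas]) auto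
    show "dis_measure (distr unitI borel (\<lambda>s. (\<phi> s, \<psi> s))) \<le> (INF \<epsilon>\<in>B. ereal \<epsilon>)"
      unfolding B_def by (intro INF_greatest dis_measure_le_box_admissible[OF meas]) auto
  qed
  finally show ?thesis
    unfolding box_dist_eq_Inf_admissible B_def .
qed

end
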